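(* Let $M_{\mathrm{B_{vi}}}$ be the monoid with generators $a,b,c$ and relations $aba=bab$, $bcb=cbc$, $aca=bac$, $cab=bca$, $acb=cac$, $abb=bbc$, $bcca=ccac$, $bbac=caab$, $cbbb=bbba$, $acbcb=bccca$, $accbb=bccba$, $accaa=ccaac$, $caacc=aacca$, $acccc=bcccb$, $bbaac=cbaab$, $caaab=abaac$, $a^5=b^5$, $b^5=c^5$, $ccbaac=accbaa$; and let $M_{\mathrm{H_{iii}}}$ be the monoid with generators $a,b,c$ and relations $aba=bab$, $aca=cac$, $bcb=abc$, $cba=acb$, $bca=cbc$, $baa=aac$, $accb=ccbc$, $aabc=cbba$, $caaa=aaab$, $bcaca=acccb$, $bccaa=accab$, $bccbb=ccbbc$, $cbbcc=bbccb$, $bcccc=accca$, $aabbc=cabba$, $cbbba=babbc$, $a^5=b^5$, $b^5=c^5$, $ccabbc=bccabb$. Let $G_{\mathrm{B_{vi}}}$, $G_{\mathrm{H_{iii}}}$ be the groups with the same presentations and $G^+_{\mathrm{B_{vi}}}$, $G^+_{\mathrm{H_{iii}}}$ the submonoids generated by $a,b,c$. Then the correspondence $a\mapsto b$, $b\mapsto a$, $c\mapsto c$ induces a monoid isomorphism $M_{\mathrm{B_{vi}}}\cong M_{\mathrm{H_{iii}}}$, and hence also isomorphisms $G_{\mathrm{B_{vi}}}\cong G_{\mathrm{H_{iii}}}$ and $G^+_{\mathrm{B_{vi}}}\cong G^+_{\mathrm{H_{iii}}}$.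
   Context: A monoid given by generators and relations is the quotient of the free monoid on the generators by the congruence generated by the relations. *)

theory Defs
  imports "HOL-Algebra.Group"
begin

inductive word_cong :: "('a list \<times> 'a list) set \<Rightarrow> 'a list \<Rightarrow> 'a list \<Rightarrow> bool"
  for R where
  base: "(u, v) \<in> R \<Longrightarrow> word_cong R u v"
| refl: "word_cong R u u"
| sym: "word_cong R u v \<Longrightarrow> word_cong R v u"
| trans: "word_cong R u v \<Longrightarrow> word_cong R v w \<Longrightarrow> word_cong R u w"
| ctxt: "word_cong R u v \<Longrightarrow> word_cong R (x @ u @ y) (x @ v @ y)"

definition word_class :: "('a list \<times> 'a list) set \<Rightarrow> 'a list \<Rightarrow> 'a list set" where
  "word_class R w = {u. word_cong R u w}"

definition presented_monoid :: "('a list \<times> 'a list) set \<Rightarrow> 'a list set monoid" where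
  "presented_monoid R =
     \<lparr> carrier = range (word_class R),
       mult = (\<lambda>X Y. {w. \<exists>u\<in>X. \<exists>v\<in>Y. word_cong R w (u @ v)}),
       one = word_class R [] \<rparr>"

text \<open>The group with the same presentation: the monoid presented by generators and their
  formal inverses (letter (x,True) stands for x^-1), relations R together with
  x x^-1 = 1 and x^-1 x = 1.\<close>

definition group_rels :: "('a list \<times> 'a list) set \<Rightarrow> (('a \<times> bool) list \<times> ('a \<times> bool) list) set" where
  "group_rels R =
     {(map (\<lambda>x. (x, False)) u, map (\<lambda>x. (x, False)) v) | u v. (u, v) \<in> R}
     \<union> {([(x, False), (x, True)], []) | x. True}
     \<union> {([(x, True), (x, False)], []) | x. True}"

definition presented_group :: "('a list \<times> 'a list) set \<Rightarrow> ('a \<times> bool) list set monoid" where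
  "presented_group R = presented_monoid (group_rels R)"

definition group_gen :: "('a list \<times> 'a list) set \<Rightarrow> 'a \<Rightarrow> ('a \<times> bool) list set" where
  "group_gen R x = word_class (group_rels R) [(x, False)]"

definition positive_submonoid :: "('a list \<times> 'a list) set \<Rightarrow> ('a \<times> bool) list set monoid" where
  "positive_submonoid R =
     (presented_group R) \<lparr> carrier :=
        \<Inter> {S. submonoid S (presented_group R) \<and> range (group_gen R) \<subseteq> S} \<rparr>"

datatype gen = a | b | c

definition rels_Bvi :: "(gen list \<times> gen list) set" where
  "rels_Bvi = {
    ([a,b,a], [b,a,b]),
    ([b,c,b], [c,b,c]),
    ([a,c,a], [b,a,c]),
    ([c,a,b], [b,c,a]),
    ([a,c,b], [c,a,c]),
    ([a,b,b], [b,b,c]),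
    ([b,c,c,a], [c,c,a,c]),
    ([b,b,a,c], [c,a,a,b]),
    ([c,b,b,b], [b,b,b,a]),
    ([a,c,b,c,b], [b,c,c,c,a]),
    ([a,c,c,b,b], [b,c,c,b,a]),
    ([a,c,c,a,a], [c,c,a,a,c]),
    ([c,a,a,c,c], [a,a,c,c,a]),
    ([a,c,c,c,c], [b,c,c,c,b]),
    ([b,b,a,a,c], [c,b,a,a,b]),
    ([c,a,a,a,b], [a,b,a,a,c]),
    ([a,a,a,a,a], [b,b,b,b,b]),
    ([b,b,b,b,b], [c,c,c,c,c]),
    ([c,c,b,a,a,c], [a,c,c,b,a,a])}"

definition rels_Hiii :: "(gen list \<times> gen list) set" where
  "rels_Hiii = {
    ([a,b,a], [b,a,b]),
    ([a,c,a], [c,a,c]),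
    ([b,c,b], [a,b,c]),
    ([c,b,a], [a,c,b]),
    ([b,c,a], [c,b,c]),
    ([b,a,a], [a,a,c]),
    ([a,c,c,b], [c,c,b,c]),
    ([a,a,b,c], [c,b,b,a]),
    ([c,a,a,a], [a,a,a,b]),
    ([b,c,a,c,a], [a,c,c,c,b]),
    ([b,c,c,a,a], [a,c,c,a,b]),
    ([b,c,c,b,b], [c,c,b,b,c]),
    ([c,b,b,c,c], [b,b,c,c,b]),
    ([b,c,c,c,c], [a,c,c,c,a]),
    ([a,a,b,b,c], [c,a,b,b,a]),
    ([c,b,b,b,a], [b,a,b,b,c]),
    ([a,a,a,a,a], [b,b,b,b,b]),
    ([b,b,b,b,b], [c,c,c,c,c]),
    ([c,c,a,b,b,c], [b,c,c,a,b,b])}"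

fun swap_ab :: "gen \<Rightarrow> gen" where
  "swap_ab a = b" | "swap_ab b = a" | "swap_ab c = c"

end

theory Submission
  imports Defs
begin

text \<open>A bijection of the generators which, together with its inverse, maps each defining
  relation into the congruence of the other presentation induces mutually inverse monoid
  isomorphisms of the congruence classes. Acting letterwise on generators and their formal
  inverses, it does the same for the group presentations, and an isomorphism of monoids carries
  the submonoid generated by a set onto the submonoid generated by its image. Under the swap of
  a and b every relation of one list becomes a relation of the other up to orientation, except
  that b^5 = c^5 becomes a^5 = c^5, which follows from a^5 = b^5 = c^5.\<close>

definition maps_rels_into ::
    "('a \<Rightarrow> 'b) \<Rightarrow> ('a list \<times> 'a list) set \<Rightarrow> ('b list \<times> 'b list) set \<Rightarrow> bool" where
  "maps_rels_into f R S \<longleftrightarrow> (\<forall>(u, v) \<in> R. word_cong S (map f u) (map f v))"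

lemma word_cong_map:
  assumes "maps_rels_into f R S"
  shows "word_cong R u v \<Longrightarrow> word_cong S (map f u) (map f v)"
proof (induction rule: word_cong.induct)
  case (base u v)
  then show ?case using assms by (auto simp: maps_rels_into_def)
next
  case (ctxt u v x y)
  then show ?case by (simp add: word_cong.ctxt)
qed (auto intro: word_cong.intros(2,3) elim: word_cong.trans)

lemma word_cong_of_rel_or_converse:
  "(u, v) \<in> R \<or> (v, u) \<in> R \<Longrightarrow> word_cong R u v"
  by (auto intro: word_cong.base word_cong.sym[OF word_cong.base])

lemma word_cong_append:
  assumes "word_cong R u u'" and "word_cong R v v'"
  shows "word_cong R (u @ v) (u' @ v')"
proof -
  have "word_cong R ([] @ u @ v) ([] @ u' @ v)" by (rule word_cong.ctxt[OF assms(1)])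
  moreover have "word_cong R (u' @ v @ []) (u' @ v' @ [])" by (rule word_cong.ctxt[OF assms(2)])
  ultimately show ?thesis by (auto intro: word_cong.trans)
qed

lemma presented_monoid_mult:
  "word_class R u \<otimes>\<^bsub>presented_monoid R\<^esub> word_class R v = word_class R (u @ v)"
  unfolding presented_monoid_def word_class_def
  by (auto intro: word_cong.trans word_cong_append word_cong.refl)

lemma presented_monoid_one: "\<one>\<^bsub>presented_monoid R\<^esub> = word_class R []"
  by (simp add: presented_monoid_def)

lemma word_class_in_carrier: "word_class R w \<in> carrier (presented_monoid R)"
  by (simp add: presented_monoid_def)

lemma monoid_presented_monoid: "monoid (presented_monoid R)"
proof (rule monoidI)
  fix X Y Z assume "X \<in> carrier (presented_monoid R)" "Y \<in> carrier (presented_monoid R)"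
    "Z \<in> carrier (presented_monoid R)"
  then obtain u v w where "X = word_class R u" "Y = word_class R v" "Z = word_class R w"
    by (auto simp: presented_monoid_def)
  then show "X \<otimes>\<^bsub>presented_monoid R\<^esub> Y \<in> carrier (presented_monoid R)"
    and "X \<otimes>\<^bsub>presented_monoid R\<^esub> Y \<otimes>\<^bsub>presented_monoid R\<^esub> Z =
         X \<otimes>\<^bsub>presented_monoid R\<^esub> (Y \<otimes>\<^bsub>presented_monoid R\<^esub> Z)"
    and "\<one>\<^bsub>presented_monoid R\<^esub> \<otimes>\<^bsub>presented_monoid R\<^esub> X = X"
    and "X \<otimes>\<^bsub>presented_monoid R\<^esub> \<one>\<^bsub>presented_monoid R\<^esub> = X"
    by (simp_all add: presented_monoid_mult presented_monoid_one word_class_in_carrier)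
qed (simp add: presented_monoid_one word_class_in_carrier)

lemma map_image_word_class:
  assumes inv: "\<And>x. g (f x) = x" "\<And>y. f (g y) = y"
    and fRS: "maps_rels_into f R S" and gSR: "maps_rels_into g S R"
  shows "map f ` word_class R w = word_class S (map f w)"
proof -
  have comp_id: "g \<circ> f = id" "f \<circ> g = id"
    by (simp_all add: fun_eq_iff inv)
  then have map_inv: "map g (map f u) = u" "map f (map g v) = v" for u v
    by simp_all
  have cong_iff: "word_cong S v (map f w) \<longleftrightarrow> word_cong R (map g v) w" for v
    using word_cong_map[OF gSR, of v "map f w"] word_cong_map[OF fRS, of "map g v" w]
    by (simp only: map_inv) blast
  show ?thesis
  proof
    show "map f ` word_class R w \<subseteq> word_class S (map f w)"
      by (auto simp: word_class_def cong_iff comp_id)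
    show "word_class S (map f w) \<subseteq> map f ` word_class R w"
    proof
      fix v assume "v \<in> word_class S (map f w)"
      then have "map g v \<in> word_class R w" by (simp add: word_class_def cong_iff)
      then show "v \<in> map f ` word_class R w" by (rule rev_image_eqI) (simp add: comp_id)
    qed
  qed
qed

lemma presented_monoid_iso:
  assumes inv: "\<And>x. g (f x) = x" "\<And>y. f (g y) = y"
    and fRS: "maps_rels_into f R S" and gSR: "maps_rels_into g S R"
  shows "image (map f) \<in> iso (presented_monoid R) (presented_monoid S)"
proof -
  note f_class = map_image_word_class[OF inv fRS gSR]
  note g_class = map_image_word_class[OF inv(2,1) gSR fRS]
  have map_inv: "map (g \<circ> f) u = u" "map (f \<circ> g) v = v" for u v
    by (simp_all add: inv map_idI)
  have "image (map f) \<in> hom (presented_monoid R) (presented_monoid S)"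
  proof (rule homI)
    fix X Y assume "X \<in> carrier (presented_monoid R)" "Y \<in> carrier (presented_monoid R)"
    then obtain u v where "X = word_class R u" "Y = word_class R v"
      by (auto simp: presented_monoid_def)
    then show "map f ` X \<in> carrier (presented_monoid S)"
      and "map f ` (X \<otimes>\<^bsub>presented_monoid R\<^esub> Y) =
           map f ` X \<otimes>\<^bsub>presented_monoid S\<^esub> map f ` Y"
      by (simp_all add: f_class presented_monoid_mult word_class_in_carrier)
  qed
  moreover have "bij_betw (image (map f)) (carrier (presented_monoid R)) (carrier (presented_monoid S))"
    by (rule bij_betw_byWitness[where f' = "image (map g)"])
      (auto simp: presented_monoid_def f_class g_class map_inv)
  ultimately show ?thesis by (simp add: iso_def)
qed

lemma maps_rels_into_group_rels_positive: "maps_rels_into (\<lambda>x. (x, False)) R (group_rels R)"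
  unfolding maps_rels_into_def by (auto intro!: word_cong.base simp: group_rels_def)

lemma maps_rels_into_group_rels:
  assumes "maps_rels_into f R S"
  shows "maps_rels_into (apfst f) (group_rels R) (group_rels S)"
proof -
  have "word_cong (group_rels S) (map (apfst f) u) (map (apfst f) v)"
    if "(u, v) \<in> group_rels R" for u v
  proof -
    from that consider (rel) u0 v0 where "u = map (\<lambda>x. (x, False)) u0"
        "v = map (\<lambda>x. (x, False)) v0" "(u0, v0) \<in> R"
      | (cancel) x where "u = [(x, False), (x, True)] \<or> u = [(x, True), (x, False)]" "v = []"
      unfolding group_rels_def by blast
    then show ?thesis
    proof cases
      case rel
      then have "word_cong S (map f u0) (map f v0)"
        using assms by (auto simp: maps_rels_into_def)
      then have "word_cong (group_rels S)
          (map (\<lambda>x. (x, False)) (map f u0)) (map (\<lambda>x. (x, False)) (map f v0))"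
        by (rule word_cong_map[OF maps_rels_into_group_rels_positive])
      then show ?thesis using rel by (simp add: comp_def)
    next
      case cancel
      then show ?thesis by (auto intro!: word_cong.base simp: group_rels_def)
    qed
  qed
  then show ?thesis by (auto simp: maps_rels_into_def)
qed

lemma apfst_inverse:
  assumes "\<And>x. g (f x) = x"
  shows "apfst g (apfst f p) = p"
  by (cases p) (simp add: assms)

lemma presented_group_iso:
  assumes inv: "\<And>x. g (f x) = x" "\<And>y. f (g y) = y"
    and fRS: "maps_rels_into f R S" and gSR: "maps_rels_into g S R"
  shows "image (map (apfst f)) \<in> iso (presented_group R) (presented_group S)"
  unfolding presented_group_def
  by (rule presented_monoid_iso[of "apfst g"])
    (simp_all add: apfst_inverse inv maps_rels_into_group_rels fRS gSR)

lemma image_group_gen: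
  assumes inv: "\<And>x. g (f x) = x" "\<And>y. f (g y) = y"
    and fRS: "maps_rels_into f R S" and gSR: "maps_rels_into g S R"
  shows "map (apfst f) ` group_gen R x = group_gen S (f x)"
  unfolding group_gen_def
  by (subst map_image_word_class[of "apfst g"])
    (simp_all add: apfst_inverse inv maps_rels_into_group_rels fRS gSR)

definition submonoid_generated :: "('a, 'b) monoid_scheme \<Rightarrow> 'a set \<Rightarrow> 'a set" where
  "submonoid_generated G A = \<Inter>{T. submonoid T G \<and> A \<subseteq> T}"

lemma (in monoid) submonoid_submonoid_generated:
  assumes "A \<subseteq> carrier G"
  shows "submonoid (submonoid_generated G A) G"
proof -
  have "carrier G \<in> {T. submonoid T G \<and> A \<subseteq> T}"
    using assms by (auto intro: submonoid.intro)
  then show ?thesis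
    unfolding submonoid_generated_def
    by (intro submonoid.intro) (auto intro: submonoid.m_closed submonoid.one_closed)
qed

lemma monoid_iso_one:
  assumes "monoid G" "monoid H" "h \<in> iso G H"
  shows "h \<one>\<^bsub>G\<^esub> = \<one>\<^bsub>H\<^esub>"
proof -
  have hom: "h \<in> hom G H" and onto: "h ` carrier G = carrier H"
    using assms(3) by (auto simp: iso_def bij_betw_def)
  obtain x where x: "x \<in> carrier G" "h x = \<one>\<^bsub>H\<^esub>"
    using onto monoid.one_closed[OF assms(2)] by force
  have "h \<one>\<^bsub>G\<^esub> = h \<one>\<^bsub>G\<^esub> \<otimes>\<^bsub>H\<^esub> h x"
    using x hom monoid.one_closed[OF assms(1)] monoid.r_one[OF assms(2)] by (simp add: hom_in_carrier)
  also have "\<dots> = h (\<one>\<^bsub>G\<^esub> \<otimes>\<^bsub>G\<^esub> x)"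
    using x hom monoid.one_closed[OF assms(1)] by (simp add: hom_mult)
  finally show ?thesis
    using x monoid.l_one[OF assms(1)] by simp
qed

lemma submonoid_image:
  assumes "h \<in> hom G H" "h \<one>\<^bsub>G\<^esub> = \<one>\<^bsub>H\<^esub>" "submonoid T G"
  shows "submonoid (h ` T) H"
proof (rule submonoid.intro)
  have "T \<subseteq> carrier G" using assms(3) by (rule submonoid.subset)
  then show "h ` T \<subseteq> carrier H" using assms(1) by (auto simp: hom_in_carrier)
  show "x \<otimes>\<^bsub>H\<^esub> y \<in> h ` T" if xy: "x \<in> h ` T" "y \<in> h ` T" for x y
  proof -
    obtain s t where "s \<in> T" "t \<in> T" "x = h s" "y = h t" using xy by blast
    then have "x \<otimes>\<^bsub>H\<^esub> y = h (s \<otimes>\<^bsub>G\<^esub> t)" and "s \<otimes>\<^bsub>G\<^esub> t \<in> T"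
      using assms(1,3) by (simp_all add: hom_mult submonoid.mem_carrier submonoid.m_closed)
    then show ?thesis by blast
  qed
  show "\<one>\<^bsub>H\<^esub> \<in> h ` T"
    using assms(2,3) by (auto intro: rev_image_eqI submonoid.one_closed)
qed

lemma submonoid_vimage:
  assumes "monoid G" "h \<in> hom G H" "h \<one>\<^bsub>G\<^esub> = \<one>\<^bsub>H\<^esub>" "submonoid T H"
  shows "submonoid (carrier G \<inter> h -` T) G"
proof (rule submonoid.intro)
  show "x \<otimes>\<^bsub>G\<^esub> y \<in> carrier G \<inter> h -` T"
    if "x \<in> carrier G \<inter> h -` T" "y \<in> carrier G \<inter> h -` T" for x y
    using that assms(1,2,4) by (simp add: hom_mult monoid.m_closed submonoid.m_closed)
  show "\<one>\<^bsub>G\<^esub> \<in> carrier G \<inter> h -` T"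
    using assms(1,3,4) by (simp add: monoid.one_closed submonoid.one_closed)
qed simp

lemma iso_image_submonoid_generated:
  assumes "monoid G" "monoid H" "h \<in> iso G H" "A \<subseteq> carrier G"
  shows "h ` submonoid_generated G A = submonoid_generated H (h ` A)"
proof
  have hom: "h \<in> hom G H" using assms(3) by (simp add: iso_def)
  have one: "h \<one>\<^bsub>G\<^esub> = \<one>\<^bsub>H\<^esub>" by (rule monoid_iso_one[OF assms(1-3)])
  show "h ` submonoid_generated G A \<subseteq> submonoid_generated H (h ` A)"
  proof -
    have "submonoid_generated G A \<subseteq> carrier G \<inter> h -` T"
      if "submonoid T H" "h ` A \<subseteq> T" for T
      unfolding submonoid_generated_def
      using that submonoid_vimage[OF assms(1) hom one] assms(4) by (intro Inter_lower) auto
    then show ?thesis unfolding submonoid_generated_def[of H] by blast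
  qed
  show "submonoid_generated H (h ` A) \<subseteq> h ` submonoid_generated G A"
    unfolding submonoid_generated_def[of H]
    using submonoid_image[OF hom one monoid.submonoid_submonoid_generated[OF assms(1,4)]]
    by (intro Inter_lower) (auto simp: submonoid_generated_def)
qed

lemma iso_restrict_carrier:
  assumes "h \<in> iso G H" "S \<subseteq> carrier G"
  shows "h \<in> iso (G\<lparr>carrier := S\<rparr>) (H\<lparr>carrier := h ` S\<rparr>)"
  using assms unfolding iso_def hom_def bij_betw_def by (auto intro: inj_on_subset simp: subset_iff)

lemma iso_submonoid_generated:
  assumes "monoid G" "monoid H" "h \<in> iso G H" "A \<subseteq> carrier G"
  shows "h \<in> iso (G\<lparr>carrier := submonoid_generated G A\<rparr>)
                 (H\<lparr>carrier := submonoid_generated H (h ` A)\<rparr>)"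
  using iso_restrict_carrier[OF assms(3)
      submonoid.subset[OF monoid.submonoid_submonoid_generated[OF assms(1,4)]]]
  by (simp add: iso_image_submonoid_generated[OF assms])

lemma positive_submonoid_iso:
  assumes inv: "\<And>x. g (f x) = x" "\<And>y. f (g y) = y"
    and fRS: "maps_rels_into f R S" and gSR: "maps_rels_into g S R"
  shows "image (map (apfst f)) \<in> iso (positive_submonoid R) (positive_submonoid S)"
proof -
  have monoid: "monoid (presented_group T)" for T :: "('c list \<times> 'c list) set"
    unfolding presented_group_def by (rule monoid_presented_monoid)
  have gens: "image (map (apfst f)) ` range (group_gen R) = range (group_gen S)"
    using surjI[of f g, OF inv(2)] by (simp add: image_image image_group_gen[OF assms])
      (metis image_image)
  have "range (group_gen R) \<subseteq> carrier (presented_group R)"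
    by (auto simp: group_gen_def presented_group_def word_class_in_carrier)
  from iso_submonoid_generated[OF monoid monoid presented_group_iso[OF assms] this]
  show ?thesis
    unfolding positive_submonoid_def gens submonoid_generated_def .
qed

lemma swap_ab_swap_ab [simp]: "swap_ab (swap_ab x) = x"
  by (cases x) simp_all

lemma maps_rels_into_swap_Bvi_Hiii: "maps_rels_into swap_ab rels_Bvi rels_Hiii"
proof -
  have "word_cong rels_Hiii [a,a,a,a,a] [c,c,c,c,c]"
    by (rule word_cong.trans[of _ _ "[b,b,b,b,b]"]; rule word_cong.base; simp add: rels_Hiii_def)
  then show ?thesis
    unfolding maps_rels_into_def rels_Bvi_def
    by simp (intro conjI; (assumption | rule word_cong_of_rel_or_converse, simp add: rels_Hiii_def))
qed

lemma maps_rels_into_swap_Hiii_Bvi: "maps_rels_into swap_ab rels_Hiii rels_Bvi"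
proof -
  have "word_cong rels_Bvi [a,a,a,a,a] [c,c,c,c,c]"
    by (rule word_cong.trans[of _ _ "[b,b,b,b,b]"]; rule word_cong.base; simp add: rels_Bvi_def)
  then show ?thesis
    unfolding maps_rels_into_def rels_Hiii_def
    by simp (intro conjI; (assumption | rule word_cong_of_rel_or_converse, simp add: rels_Bvi_def))
qed

theorem mainTheorem2:
  shows "(\<exists>h \<in> iso (presented_monoid rels_Bvi) (presented_monoid rels_Hiii).
            \<forall>x. h (word_class rels_Bvi [x]) = word_class rels_Hiii [swap_ab x])
       \<and> (\<exists>h \<in> iso (presented_group rels_Bvi) (presented_group rels_Hiii).
            \<forall>x. h (group_gen rels_Bvi x) = group_gen rels_Hiii (swap_ab x))
       \<and> (\<exists>h \<in> iso (positive_submonoid rels_Bvi) (positive_submonoid rels_Hiii).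
            \<forall>x. h (group_gen rels_Bvi x) = group_gen rels_Hiii (swap_ab x))"
proof -
  note swap = swap_ab_swap_ab swap_ab_swap_ab maps_rels_into_swap_Bvi_Hiii maps_rels_into_swap_Hiii_Bvi
  have "map swap_ab ` word_class rels_Bvi [x] = word_class rels_Hiii [swap_ab x]" for x
    using map_image_word_class[OF swap] by simp
  then show ?thesis
    using presented_monoid_iso[OF swap] presented_group_iso[OF swap]
      positive_submonoid_iso[OF swap] image_group_gen[OF swap]
    by blast
qed

end
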